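(* A class $\mathcal C$ of finite graphs has bounded expansion if and only if for every $r\in\mathbb N$ we have $\sup_{G\in\mathcal C}\mathrm{copw}_r(G)<\infty$.
   Context: Graphs are finite, simple, undirected. For a graph $G$ and $r\in\mathbb N$, $\tilde\nabla_r(G)$ is the maximum of $2|E(H)|/|V(H)|$ over all graphs $H$ such that some graph obtained from $H$ by replacing every edge by a path of length at most $r+1$ is a subgraph of $G$. A class $\mathcal C$ has bounded expansion if $\sup_{G\in\mathcal C}\tilde\nabla_r(G)<\infty$ for every $r$. The Cops and Robber game of radius $r$ and width $k$ on $G$: let $S_0=\emptyset$ and the robber choose $v_0\in V(G)$; in round $i\ge1$ the cops announce $S_i\subseteq V(G)$, $|S_i|\le k$, and the robber moves from $v_{i-1}$ to $v_i$ along a path of length at most $r$ (length $0$ allowed) avoiding $S_{i-1}\cap S_i$; the cops win if $v_i\in S_i$ for some $i$. $\mathrm{copw}_r(G)$ is the least $k$ such that the cops have a winning strategy. *)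

theory Defs
  imports Complex_Main
begin

type_synonym 'a graph = "'a set \<times> 'a set set"

definition verts :: "'a graph \<Rightarrow> 'a set" where "verts G = fst G"
definition edges :: "'a graph \<Rightarrow> 'a set set" where "edges G = snd G"

definition is_graph :: "'a graph \<Rightarrow> bool" where
  "is_graph G \<longleftrightarrow> finite (verts G) \<and>
     (\<forall>e\<in>edges G. \<exists>u v. e = {u, v} \<and> u \<noteq> v \<and> u \<in> verts G \<and> v \<in> verts G)"

definition is_path :: "'a graph \<Rightarrow> 'a list \<Rightarrow> bool" where
  "is_path G p \<longleftrightarrow> p \<noteq> [] \<and> distinct p \<and> set p \<subseteq> verts G \<and>
     (\<forall>i. Suc i < length p \<longrightarrow> {p ! i, p ! Suc i} \<in> edges G)"

definition path_len :: "'a list \<Rightarrow> nat" where "path_len p = length p - 1"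

definition inner_verts :: "'a list \<Rightarrow> 'a set" where
  "inner_verts p = set (butlast (tl p))"

text \<open>(VH, EH) is a graph H some subdivision of which, replacing every edge by a
path of length at most r+1, is a subgraph of G. Without loss of generality the
branch vertices of H are identified with their images in G.\<close>

definition shallow_top_minor :: "nat \<Rightarrow> 'a graph \<Rightarrow> 'a graph \<Rightarrow> bool" where
  "shallow_top_minor r G H \<longleftrightarrow> is_graph H \<and> verts H \<subseteq> verts G \<and>
     (\<exists>P :: 'a set \<Rightarrow> 'a list.
        (\<forall>e\<in>edges H. is_path G (P e) \<and> {hd (P e), last (P e)} = e \<and>
                      path_len (P e) \<le> r + 1 \<and> inner_verts (P e) \<inter> verts H = {}) \<and>
        (\<forall>e\<in>edges H. \<forall>f\<in>edges H. e \<noteq> f \<longrightarrow> inner_verts (P e) \<inter> inner_verts (P f) = {}))"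

definition top_grad :: "nat \<Rightarrow> 'a graph \<Rightarrow> real" where
  "top_grad r G = Max ({0} \<union> {2 * real (card (edges H)) / real (card (verts H)) | H.
                               shallow_top_minor r G H \<and> verts H \<noteq> {}})"

definition bounded_expansion :: "'a graph set \<Rightarrow> bool" where
  "bounded_expansion C \<longleftrightarrow> (\<forall>r::nat. \<exists>c::real. \<forall>G\<in>C. top_grad r G \<le> c)"

text \<open>A cop strategy maps the
history of robber positions [v_0, ..., v_{i-1}] to the set S_i.\<close>

definition cop_set :: "('a list \<Rightarrow> 'a set) \<Rightarrow> (nat \<Rightarrow> 'a) \<Rightarrow> nat \<Rightarrow> 'a set" where
  "cop_set \<sigma> v i = (if i = 0 then {} else \<sigma> (map v [0..<i]))"

definition robber_move :: "'a graph \<Rightarrow> nat \<Rightarrow> 'a set \<Rightarrow> 'a \<Rightarrow> 'a \<Rightarrow> bool" where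
  "robber_move G r X x y \<longleftrightarrow> (\<exists>p. is_path G p \<and> hd p = x \<and> last p = y \<and>
                                  path_len p \<le> r \<and> set p \<inter> X = {})"

definition consistent_play :: "'a graph \<Rightarrow> nat \<Rightarrow> ('a list \<Rightarrow> 'a set) \<Rightarrow> (nat \<Rightarrow> 'a) \<Rightarrow> bool" where
  "consistent_play G r \<sigma> v \<longleftrightarrow> v 0 \<in> verts G \<and>
     (\<forall>i\<ge>1. robber_move G r (cop_set \<sigma> v (i - 1) \<inter> cop_set \<sigma> v i) (v (i - 1)) (v i))"

definition cops_win :: "nat \<Rightarrow> nat \<Rightarrow> 'a graph \<Rightarrow> bool" where
  "cops_win r k G \<longleftrightarrow> (\<exists>\<sigma> :: 'a list \<Rightarrow> 'a set.
     (\<forall>h. \<sigma> h \<subseteq> verts G \<and> card (\<sigma> h) \<le> k) \<and>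
     (\<forall>v. consistent_play G r \<sigma> v \<longrightarrow> (\<exists>i\<ge>1. v i \<in> cop_set \<sigma> v i)))"

definition copw :: "nat \<Rightarrow> 'a graph \<Rightarrow> nat" where
  "copw r G = (LEAST k. cops_win r k G)"

end

theory Submission
  imports Defs
begin

text \<open>
  If \<open>G\<close> has an \<open>r\<close>-shallow topological minor \<open>H\<close> with more than \<open>k |V(H)|\<close> edges, then
  \<open>H\<close> has a nonempty subgraph \<open>W\<close> of minimum degree \<open>> k\<close>. At a vertex of \<open>W\<close> the
  subdivision paths towards its neighbours in \<open>W\<close> meet only in that vertex, so \<open>k\<close> cops
  can never block all of them and a robber moving along them is never caught in the game of
  radius \<open>r + 1\<close>. Hence \<open>\<nabla>~_r(G) \<le> 2 copw_{r+1}(G)\<close>.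

  Conversely, let \<open>\<nabla>~_{2r}(G) \<le> d\<close>. In a system of fans of short paths between the
  vertices of a set \<open>K\<close>, a maximal subfamily of paths with distinct end pairs and disjoint
  interiors is a shallow topological minor on \<open>K\<close>, hence has at most \<open>d |K| / 2\<close> members;
  every other path is parallel to one of them or can be cut short at one of their interior
  vertices, which gives a bound \<open>c |K|\<close> by induction on the path length. So every vertex set
  contains a vertex all of whose fans into the set are small, and removing such vertices one
  by one yields a ranking of \<open>V(G)\<close> with weak \<open>2r\<close>-reachability sets of bounded size. The
  cops occupy the weak \<open>2r\<close>-reachability set of the robber's position; then the lowest rank on
  the robber's route has to increase in every round, which cannot go on for more than
  \<open>|V(G)|\<close> rounds.
\<close>

section \<open>Paths and walks\<close>

abbreviation adj :: "'a graph \<Rightarrow> 'a \<Rightarrow> 'a \<Rightarrow> bool" where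
  "adj G x y \<equiv> {x, y} \<in> edges G"

lemma adj_is_graph: "is_graph H \<Longrightarrow> adj H x y \<Longrightarrow> x \<noteq> y \<and> x \<in> verts H \<and> y \<in> verts H"
  unfolding is_graph_def by (metis doubleton_eq_iff)

lemma is_path_iff_successively:
  "is_path G p \<longleftrightarrow> p \<noteq> [] \<and> distinct p \<and> set p \<subseteq> verts G \<and> successively (adj G) p"
  unfolding is_path_def successively_conv_nth by auto

lemma path_verts: "is_path G p \<Longrightarrow> set p \<subseteq> verts G"
  and path_nonempty: "is_path G p \<Longrightarrow> p \<noteq> []"
  unfolding is_path_def by auto

lemma path_hd_in_verts: "is_path G p \<Longrightarrow> hd p \<in> verts G"
  and path_last_in_verts: "is_path G p \<Longrightarrow> last p \<in> verts G"
  using path_verts path_nonempty hd_in_set last_in_set by blast+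

lemma inner_verts_iff: "x \<in> inner_verts p \<longleftrightarrow> (\<exists>i. 0 < i \<and> i < length p - 1 \<and> p ! i = x)"
proof
  assume "x \<in> inner_verts p"
  then obtain i where "i < length (butlast (tl p))" "butlast (tl p) ! i = x"
    unfolding inner_verts_def in_set_conv_nth by blast
  then show "\<exists>i. 0 < i \<and> i < length p - 1 \<and> p ! i = x"
    by (intro exI[of _ "Suc i"]) (auto simp: nth_butlast nth_tl)
next
  assume "\<exists>i. 0 < i \<and> i < length p - 1 \<and> p ! i = x"
  then obtain i where "0 < i" "i < length p - 1" "p ! i = x" by blast
  then show "x \<in> inner_verts p"
    unfolding inner_verts_def in_set_conv_nth
    by (intro exI[of _ "i - 1"]) (auto simp: nth_butlast nth_tl)
qed

lemma inner_verts_subset: "inner_verts p \<subseteq> set p"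
  unfolding inner_verts_def by (cases p) (auto dest: in_set_butlastD)

lemma set_path_eq: "p \<noteq> [] \<Longrightarrow> set p = insert (hd p) (insert (last p) (inner_verts p))"
  by (induction p rule: induct_list012) (auto simp: inner_verts_def)

lemma card_inner_verts_le: "card (inner_verts p) \<le> path_len p"
  unfolding inner_verts_def path_len_def
  by (metis card_length diff_le_self length_butlast length_tl order.trans)

lemma path_hd_neq_last: "is_path G p \<Longrightarrow> 1 \<le> path_len p \<Longrightarrow> hd p \<noteq> last p"
  unfolding is_path_def path_len_def
  by (auto simp: hd_conv_nth last_conv_nth nth_eq_iff_index_eq)

lemma is_path_take: "is_path G p \<Longrightarrow> 0 < n \<Longrightarrow> is_path G (take n p)"
  unfolding is_path_def by (auto dest: in_set_takeD)

lemma is_path_drop: "is_path G p \<Longrightarrow> n < length p \<Longrightarrow> is_path G (drop n p)"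
  unfolding is_path_def by (auto dest: in_set_dropD simp: add.commute add_Suc_right)

lemma is_path_rev: "is_path G p \<Longrightarrow> is_path G (rev p)"
  unfolding is_path_iff_successively by (auto simp: insert_commute)

lemma is_path_single: "x \<in> verts G \<Longrightarrow> is_path G [x]"
  unfolding is_path_def by auto

lemma path_take_Suc:
  assumes "is_path G P" "j < length P"
  shows "is_path G (take (Suc j) P)" "hd (take (Suc j) P) = hd P" "last (take (Suc j) P) = P ! j"
    "path_len (take (Suc j) P) = j" "set (take (Suc j) P) \<subseteq> set P"
proof -
  show "is_path G (take (Suc j) P)" using assms(1) by (rule is_path_take) simp
  show "hd (take (Suc j) P) = hd P" using assms(2) by (cases P) auto
  show "last (take (Suc j) P) = P ! j" using assms(2) by (simp add: take_Suc_conv_app_nth)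
  show "path_len (take (Suc j) P) = j" using assms(2) by (simp add: path_len_def)
  show "set (take (Suc j) P) \<subseteq> set P" by (rule set_take_subset)
qed

lemma inner_verts_take_Suc:
  "j < length P \<Longrightarrow> x \<in> inner_verts (take (Suc j) P) \<longleftrightarrow> (\<exists>i. 0 < i \<and> i < j \<and> P ! i = x)"
  unfolding inner_verts_iff by auto

lemma card_UN_set_paths_le:
  assumes "finite M" "\<forall>Q\<in>M. path_len Q \<le> l"
  shows "card (\<Union>Q\<in>M. set Q) \<le> card M * Suc l"
proof -
  have "card (\<Union>Q\<in>M. set Q) \<le> (\<Sum>Q\<in>M. card (set Q))" by (rule card_UN_le[OF assms(1)])
  also have "\<dots> \<le> (\<Sum>Q\<in>M. Suc l)"
  proof (rule sum_mono)
    fix Q assume "Q \<in> M"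
    then have "length Q \<le> Suc l" using assms(2) unfolding path_len_def by auto
    then show "card (set Q) \<le> Suc l" using card_length[of Q] by linarith
  qed
  finally show ?thesis by simp
qed

lemma card_UN_inner_verts_le:
  assumes "finite M" "\<forall>Q\<in>M. path_len Q \<le> l"
  shows "card (\<Union>Q\<in>M. inner_verts Q) \<le> card M * l"
proof -
  have "card (\<Union>Q\<in>M. inner_verts Q) \<le> (\<Sum>Q\<in>M. card (inner_verts Q))" by (rule card_UN_le[OF assms(1)])
  also have "\<dots> \<le> (\<Sum>Q\<in>M. l)"
    using assms(2) by (intro sum_mono) (meson card_inner_verts_le order_trans)
  finally show ?thesis by simp
qed

lemma UN_inner_verts_subset: "\<forall>Q\<in>M. is_path G Q \<Longrightarrow> (\<Union>Q\<in>M. inner_verts Q) \<subseteq> verts G"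
  using inner_verts_subset path_verts by (meson UN_least order_trans)

definition is_walk :: "'a graph \<Rightarrow> 'a list \<Rightarrow> bool" where
  "is_walk G w \<longleftrightarrow> w \<noteq> [] \<and> set w \<subseteq> verts G \<and> successively (adj G) w"

lemma path_is_walk: "is_path G p \<Longrightarrow> is_walk G p"
  unfolding is_path_iff_successively is_walk_def by blast

lemma is_walk_take:
  assumes "is_walk G w" "0 < n" shows "is_walk G (take n w)"
proof -
  have "successively (adj G) (take n w @ drop n w)" using assms(1) by (simp add: is_walk_def)
  then have "successively (adj G) (take n w)" by (simp only: successively_append_iff)
  then show ?thesis using assms unfolding is_walk_def by (auto dest: in_set_takeD)
qed

lemma is_walk_append:
  assumes "is_walk G a" "is_walk G b" "last a = hd b" shows "is_walk G (a @ tl b)"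
proof -
  have "successively (adj G) (hd b # tl b)" using assms(2) by (simp add: is_walk_def)
  then show ?thesis using assms unfolding is_walk_def
    by (cases "tl b") (auto simp: successively_append_iff dest: list.set_sel(2))
qed

lemma ex_path_in_walk:
  assumes "is_walk G w"
  shows "\<exists>p. is_path G p \<and> hd p = hd w \<and> last p = last w \<and> length p \<le> length w \<and> set p \<subseteq> set w"
  using assms
proof (induction w rule: length_induct)
  case (1 w)
  show ?case
  proof (cases "distinct w")
    case True
    then show ?thesis using 1(2) unfolding is_walk_def is_path_iff_successively by auto
  next
    case False
    then obtain xs ys zs y where w: "w = xs @ [y] @ ys @ [y] @ zs" using not_distinct_decomp by blast
    define w' where "w' = xs @ y # zs"
    have "successively (adj G) (xs @ [y])" "successively (adj G) (y # zs)"
      using 1(2) unfolding w is_walk_def by (simp_all add: successively_append_iff successively_Cons)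
    then have "successively (adj G) w'"
      unfolding w'_def using successively_append_iff[of "adj G" "xs @ [y]" zs]
      by (auto simp: successively_Cons)
    then have "is_walk G w'" using 1(2) unfolding is_walk_def w'_def w by auto
    moreover have "length w' < length w" "hd w' = hd w" "last w' = last w" "set w' \<subseteq> set w"
      unfolding w w'_def by (cases xs; cases zs; auto)+
    ultimately show ?thesis using 1(1) by (metis order.trans less_imp_le)
  qed
qed

section \<open>Shallow topological minors\<close>

lemma finite_shallow_top_minors:
  assumes "is_graph G" shows "finite {H. shallow_top_minor r G H}"
proof (rule finite_subset)
  show "{H. shallow_top_minor r G H} \<subseteq> Pow (verts G) \<times> Pow (Pow (verts G))"
    unfolding shallow_top_minor_def is_graph_def verts_def edges_def by fastforce
  show "finite (Pow (verts G) \<times> Pow (Pow (verts G)))"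
    using assms unfolding is_graph_def by simp
qed

definition avg_degree :: "'a graph \<Rightarrow> real" where
  "avg_degree H = 2 * real (card (edges H)) / real (card (verts H))"

lemma top_grad_eq_Max:
  "top_grad r G = Max ({0} \<union> avg_degree ` {H. shallow_top_minor r G H \<and> verts H \<noteq> {}})"
  unfolding top_grad_def avg_degree_def by (rule arg_cong[where f = Max]) blast

lemma finite_avg_degrees:
  "is_graph G \<Longrightarrow> finite ({0} \<union> avg_degree ` {H. shallow_top_minor r G H \<and> verts H \<noteq> {}})"
  using finite_shallow_top_minors[of G r] by simp

lemma top_grad_ge:
  assumes "is_graph G" "shallow_top_minor r G H" "verts H \<noteq> {}"
  shows "avg_degree H \<le> top_grad r G"
  unfolding top_grad_eq_Max using finite_avg_degrees[OF assms(1)] assms(2,3)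
  by (intro Max_ge) auto

lemma top_grad_nonneg:
  assumes "is_graph G" shows "0 \<le> top_grad r G"
  unfolding top_grad_eq_Max using finite_avg_degrees[OF assms] by (intro Max_ge) auto

lemma top_grad_le:
  assumes "is_graph G" "0 \<le> c"
    and "\<And>H. shallow_top_minor r G H \<Longrightarrow> verts H \<noteq> {} \<Longrightarrow> avg_degree H \<le> c"
  shows "top_grad r G \<le> c"
  unfolding top_grad_eq_Max using finite_avg_degrees[OF assms(1)] assms(2,3)
  by (subst Max_le_iff) auto

lemma shallow_top_minor_fans:
  assumes "shallow_top_minor r G H"
  shows "\<exists>Q. (\<forall>x y. adj H x y \<longrightarrow>
       is_path G (Q x y) \<and> hd (Q x y) = x \<and> last (Q x y) = y \<and> path_len (Q x y) \<le> Suc r) \<and>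
    (\<forall>x y y'. adj H x y \<and> adj H x y' \<and> y \<noteq> y' \<longrightarrow> set (Q x y) \<inter> set (Q x y') = {x})"
proof -
  obtain P where P: "\<forall>e\<in>edges H. is_path G (P e) \<and> {hd (P e), last (P e)} = e \<and>
                      path_len (P e) \<le> r + 1 \<and> inner_verts (P e) \<inter> verts H = {}"
    and disj: "\<forall>e\<in>edges H. \<forall>f\<in>edges H. e \<noteq> f \<longrightarrow> inner_verts (P e) \<inter> inner_verts (P f) = {}"
    using assms unfolding shallow_top_minor_def by blast
  have ends: "x \<noteq> y \<and> x \<in> verts H \<and> y \<in> verts H" if "adj H x y" for x y
    using adj_is_graph[OF _ that] assms unfolding shallow_top_minor_def by blast
  define Q where "Q x y = (if hd (P {x, y}) = x then P {x, y} else rev (P {x, y}))" for x y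
  have Q: "(is_path G (Q x y) \<and> hd (Q x y) = x \<and> last (Q x y) = y \<and> path_len (Q x y) \<le> Suc r) \<and>
      set (Q x y) = insert x (insert y (inner_verts (P {x, y})))" if "adj H x y" for x y
  proof -
    have p: "is_path G (P {x, y})" "{hd (P {x, y}), last (P {x, y})} = {x, y}"
      "path_len (P {x, y}) \<le> r + 1"
      using P that by auto
    have ne: "P {x, y} \<noteq> []" using p(1) by (rule path_nonempty)
    show ?thesis
    proof (cases "hd (P {x, y}) = x")
      case True
      then have "last (P {x, y}) = y" using p(2) ends[OF that] by (metis doubleton_eq_iff)
      then show ?thesis using True p set_path_eq[OF ne] unfolding Q_def by simp
    next
      case False
      then have "hd (P {x, y}) = y" "last (P {x, y}) = x" using p(2) by (metis doubleton_eq_iff)+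
      then show ?thesis using False p set_path_eq[OF ne] is_path_rev[OF p(1)] ne
        unfolding Q_def by (auto simp: hd_rev last_rev path_len_def)
    qed
  qed
  have fan: "set (Q x y) \<inter> set (Q x y') = {x}" if xy: "adj H x y" "adj H x y'" "y \<noteq> y'" for x y y'
  proof -
    have "{x, y} \<noteq> {x, y'}" using xy(3) ends[OF xy(1)] by (auto simp: doubleton_eq_iff)
    then have "inner_verts (P {x, y}) \<inter> inner_verts (P {x, y'}) = {}" by (rule disj[rule_format, OF xy(1) xy(2)])
    moreover have "inner_verts (P {x, y}) \<inter> verts H = {}" "inner_verts (P {x, y'}) \<inter> verts H = {}"
      using P xy by auto
    moreover note Q[OF xy(1), THEN conjunct2] Q[OF xy(2), THEN conjunct2]
    ultimately show ?thesis using ends[OF xy(1)] ends[OF xy(2)] xy(3) by blast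
  qed
  show ?thesis
    using Q[THEN conjunct1] fan by blast
qed

section \<open>A robber strategy on dense shallow minors\<close>

lemma ex_subgraph_min_degree_gt:
  assumes "is_graph H" "K * card (verts H) < card (edges H)"
  shows "\<exists>W\<subseteq>verts H. W \<noteq> {} \<and> (\<forall>w\<in>W. K < card {y\<in>W. adj H w y})"
  using assms
proof (induction "card (verts H)" arbitrary: H rule: less_induct)
  case less
  let ?V = "verts H" and ?E = "edges H"
  have finV: "finite ?V" and E: "\<forall>e\<in>?E. \<exists>u v. e = {u, v} \<and> u \<noteq> v \<and> u \<in> ?V \<and> v \<in> ?V"
    using less.prems(1) unfolding is_graph_def by auto
  show ?case
  proof (cases "\<forall>w\<in>?V. K < card {y\<in>?V. adj H w y}")
    case True
    have "?E \<noteq> {}" using less.prems(2) by auto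
    then have "?V \<noteq> {}" using E by auto
    then show ?thesis using True by blast
  next
    case False
    then obtain w where w: "w \<in> ?V" "card {y\<in>?V. adj H w y} \<le> K" by auto
    define H' :: "'a graph" where "H' = (?V - {w}, {e\<in>?E. w \<notin> e})"
    have "{e\<in>?E. w \<in> e} \<subseteq> (\<lambda>y. {w, y}) ` {y\<in>?V. adj H w y}"
      using E by (fastforce simp: insert_commute)
    then have "card {e\<in>?E. w \<in> e} \<le> card ((\<lambda>y. {w, y}) ` {y\<in>?V. adj H w y})"
      using finV by (intro card_mono) auto
    also have "\<dots> \<le> card {y\<in>?V. adj H w y}" using finV by (intro card_image_le) simp
    also have "\<dots> \<le> K" by (rule w(2))
    finally have "card {e\<in>?E. w \<in> e} \<le> K" .
    moreover have "card ?E \<le> card (edges H') + card {e\<in>?E. w \<in> e}"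
    proof -
      have "?E = edges H' \<union> {e\<in>?E. w \<in> e}" unfolding H'_def edges_def by auto
      then show ?thesis by (metis card_Un_le)
    qed
    moreover have cV: "card ?V = Suc (card (verts H'))"
      using w finV unfolding H'_def verts_def by (simp add: card_Suc_Diff1 del: card_Diff_insert)
    ultimately have dense: "K * card (verts H') < card (edges H')"
      using less.prems(2) by (simp add: algebra_simps)
    have "is_graph H'"
      unfolding is_graph_def
    proof (intro conjI ballI)
      show "finite (verts H')" using finV by (simp add: H'_def verts_def)
      fix e assume "e \<in> edges H'"
      then have "e \<in> ?E" "w \<notin> e" by (auto simp: H'_def edges_def)
      then obtain u v where "e = {u, v}" "u \<noteq> v" "u \<in> ?V" "v \<in> ?V" "w \<notin> {u, v}" using E by blast
      then show "\<exists>u v. e = {u, v} \<and> u \<noteq> v \<and> u \<in> verts H' \<and> v \<in> verts H'"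
        unfolding H'_def verts_def by auto
    qed
    moreover have "card (verts H') < card ?V" using cV by simp
    ultimately obtain W where W: "W \<subseteq> verts H'" "W \<noteq> {}" "\<forall>x\<in>W. K < card {y\<in>W. adj H' x y}"
      using less.hyps[of H'] dense by blast
    have "W \<subseteq> ?V" using W(1) by (auto simp: H'_def verts_def)
    moreover have "card {y\<in>W. adj H' x y} \<le> card {y\<in>W. adj H x y}" for x
      using \<open>W \<subseteq> ?V\<close> finV unfolding H'_def edges_def
      by (intro card_mono) (auto intro: finite_subset)
    ultimately show ?thesis using W(2,3) by (meson less_le_trans)
  qed
qed

lemma ex_disjoint_from_small_set:
  assumes "finite S" "card S < card N" "\<forall>y\<in>N. \<forall>y'\<in>N. y \<noteq> y' \<longrightarrow> A y \<inter> A y' = {}"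
  shows "\<exists>y\<in>N. A y \<inter> S = {}"
proof (rule ccontr)
  assume miss: "\<not> ?thesis"
  define f where "f y = (SOME s. s \<in> A y \<inter> S)" for y
  have hit: "f y \<in> A y \<inter> S" if "y \<in> N" for y
  proof -
    have "\<exists>s. s \<in> A y \<inter> S" using that miss by blast
    then show ?thesis unfolding f_def by (rule someI_ex)
  qed
  have "inj_on f N"
  proof (rule inj_onI)
    fix y y' assume yy': "y \<in> N" "y' \<in> N" "f y = f y'"
    then have "A y \<inter> A y' \<noteq> {}" using hit[OF yy'(1)] hit[OF yy'(2)] by auto
    then show "y = y'" using yy' assms(3) by blast
  qed
  moreover have "f ` N \<subseteq> S" using hit by blast
  ultimately have "card N \<le> card S" using assms(1) by (rule card_inj_on_le)
  then show False using assms(2) by simp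
qed

lemma robber_escape:
  assumes H: "shallow_top_minor r G H"
    and W: "\<forall>w\<in>W. K < card {y\<in>W. adj H w y}" "x \<in> W"
    and S: "finite S" "card S \<le> K"
  shows "\<exists>p. is_path G p \<and> hd p = x \<and> last p \<in> W \<and> last p \<noteq> x \<and> path_len p \<le> Suc r \<and>
             set p \<inter> (S - {x}) = {}"
proof -
  obtain Q where Q: "\<forall>x y. adj H x y \<longrightarrow>
       is_path G (Q x y) \<and> hd (Q x y) = x \<and> last (Q x y) = y \<and> path_len (Q x y) \<le> Suc r"
    and fan: "\<forall>x y y'. adj H x y \<and> adj H x y' \<and> y \<noteq> y' \<longrightarrow> set (Q x y) \<inter> set (Q x y') = {x}"
    using shallow_top_minor_fans[OF H] by blast
  let ?N = "{y\<in>W. adj H x y}"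
  \<comment> \<open>the paths towards the more than \<open>K\<close> neighbours of \<open>x\<close> in \<open>W\<close> only meet in \<open>x\<close>\<close>
  have "\<exists>y\<in>?N. (set (Q x y) - {x}) \<inter> S = {}"
  proof (rule ex_disjoint_from_small_set[OF S(1)])
    show "card S < card ?N" using W S(2) by (meson le_less_trans)
    show "\<forall>y\<in>?N. \<forall>y'\<in>?N. y \<noteq> y' \<longrightarrow> (set (Q x y) - {x}) \<inter> (set (Q x y') - {x}) = {}"
    proof (intro ballI impI)
      fix y y' assume "y \<in> ?N" "y' \<in> ?N" "y \<noteq> y'"
      then have "set (Q x y) \<inter> set (Q x y') = {x}" using fan by simp
      then show "(set (Q x y) - {x}) \<inter> (set (Q x y') - {x}) = {}" by blast
    qed
  qed
  then obtain y where y: "y \<in> W" "adj H x y" "(set (Q x y) - {x}) \<inter> S = {}" by blast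
  have "x \<noteq> y" using adj_is_graph[OF _ y(2)] H unfolding shallow_top_minor_def by blast
  moreover have "is_path G (Q x y) \<and> hd (Q x y) = x \<and> last (Q x y) = y \<and> path_len (Q x y) \<le> Suc r"
    using Q y(2) by simp
  moreover have "set (Q x y) \<inter> (S - {x}) = {}" using y(3) by blast
  ultimately show ?thesis using y(1) by metis
qed

lemma ex_course_of_values_seq: "\<exists>v. v 0 = a \<and> (\<forall>n. v (Suc n) = f (map v [0..<Suc n]))"
proof -
  define hist where "hist = rec_nat [a] (\<lambda>_ h. h @ [f h])"
  have hist: "hist 0 = [a]" "hist (Suc n) = hist n @ [f (hist n)]" for n
    by (simp_all add: hist_def)
  define v where "v i = last (hist i)" for i
  have "hist n = map v [0..<Suc n]" for n
  proof (induction n)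
    case (Suc n)
    have "v (Suc n) = f (hist n)" by (simp add: v_def hist)
    then show ?case using Suc.IH by (simp add: hist)
  qed (simp add: v_def hist)
  then show ?thesis by (intro exI[of _ v]) (simp add: v_def hist)
qed

lemma not_cops_win_if_escape:
  assumes W: "W \<subseteq> verts G" "W \<noteq> {}"
    and escape: "\<And>x S. x \<in> W \<Longrightarrow> S \<subseteq> verts G \<Longrightarrow> card S \<le> k \<Longrightarrow>
       \<exists>p. is_path G p \<and> hd p = x \<and> last p \<in> W - S \<and> path_len p \<le> r \<and> set p \<inter> (S - {x}) = {}"
  shows "\<not> cops_win r k G"
proof
  assume "cops_win r k G"
  then obtain \<sigma> where \<sigma>: "\<And>h. \<sigma> h \<subseteq> verts G \<and> card (\<sigma> h) \<le> k"
    and win: "\<And>v. consistent_play G r \<sigma> v \<Longrightarrow> \<exists>i\<ge>1. v i \<in> cop_set \<sigma> v i"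
    unfolding cops_win_def by blast
  define esc where "esc h = (SOME p. is_path G p \<and> hd p = last h \<and> last p \<in> W - \<sigma> h \<and>
    path_len p \<le> r \<and> set p \<inter> (\<sigma> h - {last h}) = {})" for h
  have esc: "is_path G (esc h) \<and> hd (esc h) = last h \<and> last (esc h) \<in> W - \<sigma> h \<and>
      path_len (esc h) \<le> r \<and> set (esc h) \<inter> (\<sigma> h - {last h}) = {}" if "last h \<in> W" for h
    unfolding esc_def by (rule someI_ex) (rule escape[OF that conjunct1[OF \<sigma>] conjunct2[OF \<sigma>]])
  \<comment> \<open>the robber stays put unless a cop is announced on its vertex, and then escapes within \<open>W\<close>\<close>
  define step where "step h = (if last h \<in> \<sigma> h then last (esc h) else last h)" for h
  obtain w0 where "w0 \<in> W" using W(2) by blast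
  obtain v where v0: "v 0 = w0" and vS: "\<And>n. v (Suc n) = step (map v [0..<Suc n])"
    using ex_course_of_values_seq by metis
  have cop_Suc: "cop_set \<sigma> v (Suc n) = \<sigma> (map v [0..<Suc n])" for n
    by (simp add: cop_set_def)
  have move: "v (Suc n) \<in> W \<and> v (Suc n) \<notin> cop_set \<sigma> v (Suc n) \<and>
      robber_move G r (cop_set \<sigma> v n \<inter> cop_set \<sigma> v (Suc n)) (v n) (v (Suc n))"
    if "v n \<in> W" "v n \<notin> cop_set \<sigma> v n" for n
  proof (cases "v n \<in> cop_set \<sigma> v (Suc n)")
    case False
    then have "v (Suc n) = v n" using vS[of n] cop_Suc[of n] by (simp add: step_def)
    moreover have "is_path G [v n]" using that(1) W(1) by (intro is_path_single) blast
    ultimately show ?thesis using that False unfolding robber_move_def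
      by (intro conjI exI[of _ "[v n]"]) (auto simp: path_len_def)
  next
    case True
    let ?p = "esc (map v [0..<Suc n])"
    have "v (Suc n) = last ?p" using vS[of n] cop_Suc[of n] True by (simp add: step_def)
    moreover have "is_path G ?p \<and> hd ?p = v n \<and> last ?p \<in> W - cop_set \<sigma> v (Suc n) \<and>
        path_len ?p \<le> r \<and> set ?p \<inter> (cop_set \<sigma> v (Suc n) - {v n}) = {}"
      using esc[of "map v [0..<Suc n]"] that(1) cop_Suc[of n] by simp
    ultimately show ?thesis using that(2) unfolding robber_move_def
      by (intro conjI exI[of _ ?p]) auto
  qed
  have inv: "v n \<in> W \<and> v n \<notin> cop_set \<sigma> v n" for n
    by (induction n) (use v0 \<open>w0 \<in> W\<close> move in \<open>auto simp: cop_set_def\<close>)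
  have "consistent_play G r \<sigma> v"
    unfolding consistent_play_def
  proof (intro conjI allI impI)
    show "v 0 \<in> verts G" using inv[of 0] W(1) by blast
    fix i :: nat assume "1 \<le> i"
    then obtain n where "i = Suc n" by (cases i) auto
    then show "robber_move G r (cop_set \<sigma> v (i - 1) \<inter> cop_set \<sigma> v i) (v (i - 1)) (v i)"
      using move inv by simp
  qed
  then show False using win inv by blast
qed

lemma not_cops_win_if_min_degree_minor:
  assumes G: "is_graph G" and H: "shallow_top_minor r G H"
    and W: "W \<subseteq> verts G" "W \<noteq> {}" "\<forall>w\<in>W. K < card {y\<in>W. adj H w y}" and "k \<le> K"
  shows "\<not> cops_win (Suc r) k G"
proof (rule not_cops_win_if_escape[OF W(1,2)])
  fix x S assume x: "x \<in> W" and S: "S \<subseteq> verts G" "card S \<le> k"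
  have "finite S" using S(1) G finite_subset unfolding is_graph_def by blast
  then obtain p where p: "is_path G p" "hd p = x" "last p \<in> W" "last p \<noteq> x" "path_len p \<le> Suc r"
    "set p \<inter> (S - {x}) = {}"
    using robber_escape[OF H W(3) x \<open>finite S\<close> le_trans[OF S(2) \<open>k \<le> K\<close>]] by blast
  moreover have "last p \<notin> S"
    using p(4,6) last_in_set[OF path_nonempty[OF p(1)]] by (auto simp: disjoint_iff)
  ultimately show "\<exists>p. is_path G p \<and> hd p = x \<and> last p \<in> W - S \<and> path_len p \<le> Suc r \<and>
      set p \<inter> (S - {x}) = {}"
    by (intro exI[of _ p]) simp
qed

lemma cops_win_card_verts:
  assumes "is_graph G" shows "cops_win r (card (verts G)) G"
  unfolding cops_win_def
proof (intro exI[of _ "\<lambda>_. verts G"] conjI allI impI)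
  fix v assume "consistent_play G r (\<lambda>_. verts G) v"
  then have "robber_move G r (cop_set (\<lambda>_. verts G) v 0 \<inter> cop_set (\<lambda>_. verts G) v 1) (v 0) (v 1)"
    unfolding consistent_play_def by (metis diff_Suc_1 le_refl One_nat_def)
  then obtain p where "is_path G p" "last p = v 1" unfolding robber_move_def by blast
  then have "v 1 \<in> verts G" using path_last_in_verts by metis
  then show "\<exists>i\<ge>1. v i \<in> cop_set (\<lambda>_. verts G) v i" by (intro exI[of _ 1]) (simp add: cop_set_def)
qed auto

lemma cops_win_copw: "is_graph G \<Longrightarrow> cops_win r (copw r G) G"
  unfolding copw_def using cops_win_card_verts by (rule LeastI)

lemma top_grad_le_copw:
  assumes G: "is_graph G" shows "top_grad r G \<le> 2 * real (copw (Suc r) G)"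
proof (rule top_grad_le[OF G])
  let ?K = "copw (Suc r) G"
  fix H assume H: "shallow_top_minor r G H" "verts H \<noteq> {}"
  have Hg: "is_graph H" and HG: "verts H \<subseteq> verts G" using H(1) unfolding shallow_top_minor_def by auto
  have "card (edges H) \<le> ?K * card (verts H)"
  proof (rule ccontr)
    assume "\<not> ?thesis"
    then obtain W where "W \<subseteq> verts H" "W \<noteq> {}" "\<forall>w\<in>W. ?K < card {y\<in>W. adj H w y}"
      using ex_subgraph_min_degree_gt[OF Hg] by (meson not_le)
    then show False
      using not_cops_win_if_min_degree_minor[OF G H(1)] cops_win_copw[OF G] HG by blast
  qed
  moreover have "0 < card (verts H)" using Hg H(2) unfolding is_graph_def by (simp add: card_gt_0_iff)
  ultimately show "avg_degree H \<le> 2 * real ?K"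
    unfolding avg_degree_def by (simp add: divide_le_eq mult.commute flip: of_nat_mult)
qed simp

section \<open>Fan systems\<close>

definition K_path :: "'a graph \<Rightarrow> nat \<Rightarrow> 'a set \<Rightarrow> 'a list \<Rightarrow> bool" where
  "K_path G l K P \<longleftrightarrow> is_path G P \<and> 1 \<le> path_len P \<and> path_len P \<le> l \<and>
     hd P \<in> K \<and> last P \<in> K \<and> inner_verts P \<inter> K = {}"

lemma K_pathD:
  assumes "K_path G l K P"
  shows "is_path G P" "1 \<le> path_len P" "path_len P \<le> l" "hd P \<in> K" "last P \<in> K"
    "x \<in> inner_verts P \<Longrightarrow> x \<notin> K"
  using assms unfolding K_path_def by auto

lemma K_path_mono: "K_path G l K P \<Longrightarrow> l \<le> l' \<Longrightarrow> K_path G l' K P"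
  unfolding K_path_def by auto

definition fan_system :: "'a graph \<Rightarrow> nat \<Rightarrow> 'a set \<Rightarrow> 'a list set \<Rightarrow> bool" where
  "fan_system G l K \<Psi> \<longleftrightarrow> finite \<Psi> \<and> (\<forall>P\<in>\<Psi>. K_path G l K P) \<and>
     (\<forall>P\<in>\<Psi>. \<forall>Q\<in>\<Psi>. P \<noteq> Q \<and> hd P = hd Q \<longrightarrow> set P \<inter> set Q = {hd P})"

lemma fan_systemD:
  assumes "fan_system G l K \<Psi>"
  shows "finite \<Psi>" "P \<in> \<Psi> \<Longrightarrow> K_path G l K P"
    "P \<in> \<Psi> \<Longrightarrow> Q \<in> \<Psi> \<Longrightarrow> P \<noteq> Q \<Longrightarrow> hd P = hd Q \<Longrightarrow> set P \<inter> set Q = {hd P}"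
  using assms unfolding fan_system_def by auto

lemma fan_system_subset: "fan_system G l K \<Psi> \<Longrightarrow> \<Psi>' \<subseteq> \<Psi> \<Longrightarrow> fan_system G l K \<Psi>'"
  unfolding fan_system_def by (meson finite_subset subsetD)

lemma fan_system_inj_ends:
  assumes "fan_system G l K \<Psi>" shows "inj_on (\<lambda>P. (hd P, last P)) \<Psi>"
proof (rule inj_onI)
  fix P Q assume PQ: "P \<in> \<Psi>" "Q \<in> \<Psi>" "(hd P, last P) = (hd Q, last Q)"
  note P = K_pathD[OF fan_systemD(2)[OF assms PQ(1)]] and Q = K_pathD[OF fan_systemD(2)[OF assms PQ(2)]]
  show "P = Q"
  proof (rule ccontr)
    assume "P \<noteq> Q"
    then have "set P \<inter> set Q = {hd P}" using fan_systemD(3)[OF assms PQ(1,2)] PQ(3) by simp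
    moreover have "last P \<in> set P" "last P \<in> set Q"
      using PQ(3) last_in_set path_nonempty P(1) Q(1) by (metis, metis prod.inject)
    moreover have "hd P \<noteq> last P" using path_hd_neq_last P(1,2) by blast
    ultimately show False by (metis IntI singletonD)
  qed
qed

lemma K_path_take_first_hit:
  assumes P: "K_path G (Suc l) K P" and hit: "inner_verts P \<inter> F \<noteq> {}"
  shows "\<exists>j<length P. K_path G l (K \<union> F) (take (Suc j) P)"
proof -
  note path = K_pathD[OF P]
  define j where "j = (LEAST j. 0 < j \<and> P ! j \<in> F)"
  obtain x where "x \<in> inner_verts P" "x \<in> F" using hit by auto
  then obtain i where i: "0 < i" "i < length P - 1" "P ! i \<in> F"
    unfolding inner_verts_iff by blast
  have j: "0 < j \<and> P ! j \<in> F" unfolding j_def by (rule LeastI[of _ i]) (use i in simp)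
  have "j \<le> i" unfolding j_def by (rule Least_le) (use i in simp)
  then have jl: "j < length P - 1" using i(2) by linarith
  have before: "P ! i \<notin> F" if "0 < i" "i < j" for i
    using not_less_Least[of i "\<lambda>j. 0 < j \<and> P ! j \<in> F"] that unfolding j_def by blast
  note pre = path_take_Suc[OF path(1), of j]
  have "x \<notin> K \<union> F" if x: "x \<in> inner_verts (take (Suc j) P)" for x
  proof -
    obtain i where i: "0 < i" "i < j" "P ! i = x"
      using x inner_verts_take_Suc[of j P] jl by auto
    then have "x \<in> inner_verts P" using jl unfolding inner_verts_iff by auto
    then show ?thesis using path(6) before i by blast
  qed
  moreover have "j \<le> l" using jl path(3) unfolding path_len_def by linarith
  ultimately have "K_path G l (K \<union> F) (take (Suc j) P)"
    using pre jl j path(4) unfolding K_path_def by auto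
  moreover have "j < length P" using jl by linarith
  ultimately show ?thesis by blast
qed

lemma fan_system_truncate:
  assumes \<Psi>: "fan_system G (Suc l) K \<Psi>" and hit: "\<forall>P\<in>\<Psi>. inner_verts P \<inter> F \<noteq> {}"
  shows "\<exists>\<Psi>'. fan_system G l (K \<union> F) \<Psi>' \<and> card \<Psi>' = card \<Psi>"
proof -
  note fan = fan_systemD(3)[OF \<Psi>]
  define pre_len where "pre_len P = (SOME j. j < length P \<and> K_path G l (K \<union> F) (take (Suc j) P))"
    for P :: "'a list"
  define pre where "pre P = take (Suc (pre_len P)) P" for P
  have pre: "K_path G l (K \<union> F) (pre P)" "hd (pre P) = hd P" "set (pre P) \<subseteq> set P"
    if "P \<in> \<Psi>" for P
  proof -
    note path = fan_systemD(2)[OF \<Psi> that]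
    from someI_ex[OF K_path_take_first_hit[OF path hit[rule_format, OF that]]]
    have "pre P = take (Suc (pre_len P)) P" "pre_len P < length P" "K_path G l (K \<union> F) (pre P)"
      unfolding pre_def pre_len_def by blast+
    then show "K_path G l (K \<union> F) (pre P)" "hd (pre P) = hd P" "set (pre P) \<subseteq> set P"
      using path_take_Suc(2,5)[OF K_pathD(1)[OF path]] by simp_all
  qed
  have pre_last: "last (pre P) \<in> set (pre P)" "last (pre P) \<noteq> hd P" if "P \<in> \<Psi>" for P
  proof -
    note path = K_pathD(1,2)[OF pre(1)[OF that]]
    show "last (pre P) \<in> set (pre P)" using path_nonempty[OF path(1)] by simp
    show "last (pre P) \<noteq> hd P" using path_hd_neq_last[OF path] pre(2)[OF that] by simp
  qed
  have "inj_on pre \<Psi>"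
  proof (rule inj_onI)
    fix P Q assume PQ: "P \<in> \<Psi>" "Q \<in> \<Psi>" "pre P = pre Q"
    show "P = Q"
    proof (rule ccontr)
      assume "P \<noteq> Q"
      moreover have "hd P = hd Q" using pre(2)[OF PQ(1)] pre(2)[OF PQ(2)] PQ(3) by simp
      ultimately have "set P \<inter> set Q = {hd P}" using fan PQ by simp
      moreover have "last (pre P) \<in> set P \<inter> set Q"
        using pre_last(1)[OF PQ(1)] pre(3)[OF PQ(1)] pre(3)[OF PQ(2)] PQ(3) by auto
      ultimately show False using pre_last(2)[OF PQ(1)] by auto
    qed
  qed
  moreover have "fan_system G l (K \<union> F) (pre ` \<Psi>)"
    unfolding fan_system_def
  proof (intro conjI ballI impI)
    show "finite (pre ` \<Psi>)" using fan_systemD(1)[OF \<Psi>] by simp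
    show "K_path G l (K \<union> F) R" if "R \<in> pre ` \<Psi>" for R using that pre(1) by blast
  next
    fix R R' assume RR': "R \<in> pre ` \<Psi>" "R' \<in> pre ` \<Psi>" "R \<noteq> R' \<and> hd R = hd R'"
    then obtain P P' where P: "P \<in> \<Psi>" "R = pre P" "P' \<in> \<Psi>" "R' = pre P'" by blast
    then have "P \<noteq> P'" "hd P = hd P'" using RR'(3) pre(2)[OF P(1)] pre(2)[OF P(3)] by auto
    then have "set P \<inter> set P' = {hd P}" using fan P(1,3) by simp
    moreover have "hd R \<in> set R" "hd R' \<in> set R'"
      using K_pathD(1)[OF pre(1)[OF P(1)]] K_pathD(1)[OF pre(1)[OF P(3)]] P(2,4) path_nonempty hd_in_set
      by metis+
    moreover have "set R \<subseteq> set P" "set R' \<subseteq> set P'" "hd R = hd P"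
      using pre(2,3)[OF P(1)] pre(3)[OF P(3)] P(2,4) by auto
    ultimately show "set R \<inter> set R' = {hd R}" using RR'(3) by auto
  qed
  ultimately show ?thesis using card_image by blast
qed

abbreviation ends :: "'a list \<Rightarrow> 'a set" where
  "ends P \<equiv> {hd P, last P}"

definition independent_paths :: "'a list set \<Rightarrow> bool" where
  "independent_paths M \<longleftrightarrow>
     (\<forall>P\<in>M. \<forall>Q\<in>M. P \<noteq> Q \<longrightarrow> ends P \<noteq> ends Q \<and> inner_verts P \<inter> inner_verts Q = {})"

lemma independent_paths_insert:
  assumes "independent_paths M" "ends P \<notin> ends ` M"
    "inner_verts P \<inter> (\<Union>Q\<in>M. inner_verts Q) = {}"
  shows "independent_paths (insert P M)"
  unfolding independent_paths_def
proof (intro ballI impI)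
  fix Q R assume QR: "Q \<in> insert P M" "R \<in> insert P M" "Q \<noteq> R"
  have new: "ends P \<noteq> ends S \<and> inner_verts P \<inter> inner_verts S = {}" if "S \<in> M" for S
    using assms(2,3) that by blast
  show "ends Q \<noteq> ends R \<and> inner_verts Q \<inter> inner_verts R = {}"
  proof (cases "Q = P \<or> R = P")
    case True
    then show ?thesis using new QR by (metis Int_commute insertE)
  next
    case False
    then show ?thesis using assms(1) QR unfolding independent_paths_def by blast
  qed
qed

lemma ex_maximal_independent_paths:
  assumes "finite \<Psi>"
  obtains M where "M \<subseteq> \<Psi>" "independent_paths M"
    "\<And>P. P \<in> \<Psi> \<Longrightarrow> ends P \<notin> ends ` M \<Longrightarrow> inner_verts P \<inter> (\<Union>Q\<in>M. inner_verts Q) \<noteq> {}"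
proof -
  let ?ok = "\<lambda>M. M \<subseteq> \<Psi> \<and> independent_paths M"
  have "?ok {}" by (simp add: independent_paths_def)
  moreover have "\<forall>M. ?ok M \<longrightarrow> card M < Suc (card \<Psi>)"
    using assms by (simp add: card_mono less_Suc_eq_le)
  ultimately obtain M where M: "?ok M" and max: "\<And>M'. ?ok M' \<Longrightarrow> card M' \<le> card M"
    using ex_has_greatest_nat[of ?ok "{}" card "Suc (card \<Psi>)"] by blast
  have hit: "inner_verts P \<inter> (\<Union>Q\<in>M. inner_verts Q) \<noteq> {}"
    if P: "P \<in> \<Psi>" "ends P \<notin> ends ` M" for P
  proof
    assume "inner_verts P \<inter> (\<Union>Q\<in>M. inner_verts Q) = {}"
    then have "?ok (insert P M)" using M P independent_paths_insert by blast
    then have "card (insert P M) \<le> card M" by (rule max)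
    moreover have "P \<notin> M" using P(2) by blast
    moreover have "finite M" using M assms finite_subset by blast
    ultimately show False by simp
  qed
  show thesis using that[of M] M hit by blast
qed

lemma card_parallel_paths_le:
  assumes "fan_system G l K \<Psi>" "finite M"
  shows "card {P\<in>\<Psi>. ends P \<in> ends ` M} \<le> 2 * card M"
proof -
  let ?e = "\<lambda>P. (hd P, last P)"
  have "?e ` {P\<in>\<Psi>. ends P \<in> ends ` M} \<subseteq> ?e ` M \<union> (\<lambda>Q. (last Q, hd Q)) ` M"
    by (auto simp: doubleton_eq_iff)
  then have "card (?e ` {P\<in>\<Psi>. ends P \<in> ends ` M}) \<le> card (?e ` M \<union> (\<lambda>Q. (last Q, hd Q)) ` M)"
    using assms(2) by (intro card_mono) auto
  also have "\<dots> \<le> card (?e ` M) + card ((\<lambda>Q. (last Q, hd Q)) ` M)" by (rule card_Un_le)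
  also have "\<dots> \<le> 2 * card M"
    using card_image_le[OF assms(2), of ?e] card_image_le[OF assms(2), of "\<lambda>Q. (last Q, hd Q)"] by simp
  finally show ?thesis
    using fan_system_inj_ends[OF assms(1)] by (simp add: card_image inj_on_subset)
qed

lemma shallow_top_minor_of_independent_paths:
  assumes "finite K" "K \<subseteq> verts G" "\<forall>P\<in>M. K_path G (Suc \<rho>) K P" "independent_paths M"
  shows "shallow_top_minor \<rho> G (K, ends ` M)"
proof -
  note path = K_pathD[OF assms(3)[rule_format]]
  define P where "P e = (SOME P. P \<in> M \<and> ends P = e)" for e
  have P: "P e \<in> M" "ends (P e) = e" if "e \<in> ends ` M" for e
    using someI_ex[of "\<lambda>P. P \<in> M \<and> ends P = e"] that unfolding P_def by blast+
  have graph: "is_graph (K, ends ` M)"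
    unfolding is_graph_def verts_def edges_def
  proof (intro conjI ballI)
    fix e assume "e \<in> snd (K, ends ` M)"
    then obtain Q where "Q \<in> M" "e = ends Q" by auto
    then show "\<exists>u v. e = {u, v} \<and> u \<noteq> v \<and> u \<in> fst (K, ends ` M) \<and> v \<in> fst (K, ends ` M)"
      using path(2,4,5)[of Q] path_hd_neq_last[OF path(1)] by auto
  qed (use assms(1) in simp)
  have model: "is_path G (P e) \<and> {hd (P e), last (P e)} = e \<and>
      path_len (P e) \<le> \<rho> + 1 \<and> inner_verts (P e) \<inter> K = {}" if "e \<in> ends ` M" for e
    using P[OF that] path(1,3,6)[of "P e"] by auto
  have disj: "inner_verts (P e) \<inter> inner_verts (P f) = {}"
    if "e \<in> ends ` M" "f \<in> ends ` M" "e \<noteq> f" for e f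
  proof -
    have "P e \<noteq> P f" using P that by metis
    then show ?thesis using assms(4) P(1)[OF that(1)] P(1)[OF that(2)] unfolding independent_paths_def
      by blast
  qed
  show ?thesis
    unfolding shallow_top_minor_def
  proof (intro conjI exI[of _ P] ballI impI)
    show "verts (K, ends ` M) \<subseteq> verts G" using assms(2) by (simp add: verts_def)
  qed (use graph model disj in \<open>simp_all add: verts_def edges_def\<close>)
qed

lemma card_independent_paths_le:
  assumes G: "is_graph G" and K: "K \<subseteq> verts G"
    and M: "\<forall>P\<in>M. K_path G (Suc \<rho>) K P" "independent_paths M"
  shows "2 * real (card M) \<le> top_grad \<rho> G * real (card K)"
proof (cases "K = {}")
  case True
  then have "M = {}" using M(1) by (auto dest: K_pathD(4))
  then show ?thesis using top_grad_nonneg[OF G] by simp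
next
  case False
  have finK: "finite K" using G K finite_subset unfolding is_graph_def by blast
  have "inj_on ends M"
  proof (rule inj_onI)
    fix P Q assume "P \<in> M" "Q \<in> M" "ends P = ends Q"
    then show "P = Q" using M(2) unfolding independent_paths_def by metis
  qed
  then have "avg_degree (K, ends ` M) = 2 * real (card M) / real (card K)"
    unfolding avg_degree_def verts_def edges_def by (simp add: card_image)
  moreover have "avg_degree (K, ends ` M) \<le> top_grad \<rho> G"
    using top_grad_ge[OF G shallow_top_minor_of_independent_paths[OF finK K M]] False
    by (simp add: verts_def)
  moreover have "0 < real (card K)" using False finK by (simp add: card_gt_0_iff)
  ultimately show ?thesis by (simp add: divide_le_eq)
qed

text \<open>From \<open>|\<Psi>| \<le> 2|M| + c_l (|K| + (l + 1) |M|)\<close> and \<open>2 |M| \<le> d |K|\<close> in the proof of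
  \<open>card_fan_system_le\<close>.\<close>

primrec fan_const :: "real \<Rightarrow> nat \<Rightarrow> real" where
  "fan_const d 0 = 0"
| "fan_const d (Suc l) = d + fan_const d l * (1 + real (Suc l) * d / 2)"

lemma fan_const_nonneg: "0 \<le> d \<Longrightarrow> 0 \<le> fan_const d l"
  by (induction l) auto

lemma card_fan_system_le:
  assumes G: "is_graph G" and d: "top_grad \<rho> G \<le> d"
  shows "l \<le> Suc \<rho> \<Longrightarrow> K \<subseteq> verts G \<Longrightarrow> fan_system G l K \<Psi> \<Longrightarrow>
    real (card \<Psi>) \<le> fan_const d l * real (card K)"
proof (induction l arbitrary: K \<Psi>)
  case 0
  then have "\<Psi> = {}" unfolding fan_system_def K_path_def by auto
  then show ?case by simp
next
  case (Suc l)
  note \<Psi> = Suc.prems(3)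
  have d0: "0 \<le> d" using top_grad_nonneg[OF G, of \<rho>] d by linarith
  have paths: "K_path G (Suc l) K P" if "P \<in> \<Psi>" for P using fan_systemD(2)[OF \<Psi> that] .
  obtain M where M: "M \<subseteq> \<Psi>" "independent_paths M"
    and hit: "\<And>P. P \<in> \<Psi> \<Longrightarrow> ends P \<notin> ends ` M \<Longrightarrow> inner_verts P \<inter> (\<Union>Q\<in>M. inner_verts Q) \<noteq> {}"
    using ex_maximal_independent_paths[OF fan_systemD(1)[OF \<Psi>]] by blast
  have finM: "finite M" using M(1) fan_systemD(1)[OF \<Psi>] finite_subset by blast
  have "\<forall>P\<in>M. K_path G (Suc \<rho>) K P" using M(1) paths K_path_mono Suc.prems(1) by blast
  then have cM: "2 * real (card M) \<le> d * real (card K)"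
    using card_independent_paths_le[OF G Suc.prems(2) _ M(2)] d by (meson mult_right_mono of_nat_0_le_iff order_trans)
  define F where "F = (\<Union>Q\<in>M. inner_verts Q)"
  have "\<forall>Q\<in>M. path_len Q \<le> Suc l" using M(1) K_pathD(3)[OF paths] by blast
  then have cF: "card F \<le> card M * Suc l" unfolding F_def by (rule card_UN_inner_verts_le[OF finM])
  define \<Psi>a where "\<Psi>a = {P\<in>\<Psi>. ends P \<in> ends ` M}"
  have "fan_system G (Suc l) K (\<Psi> - \<Psi>a)" using \<Psi> by (rule fan_system_subset) blast
  moreover have "\<forall>P\<in>\<Psi> - \<Psi>a. inner_verts P \<inter> F \<noteq> {}"
    unfolding F_def by (intro ballI hit) (auto simp: \<Psi>a_def)
  ultimately obtain \<Psi>' where \<Psi>': "fan_system G l (K \<union> F) \<Psi>'" "card \<Psi>' = card (\<Psi> - \<Psi>a)"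
    by (metis fan_system_truncate)
  have "F \<subseteq> verts G"
    unfolding F_def using M(1) K_pathD(1)[OF paths] by (intro UN_inner_verts_subset) blast
  then have "real (card \<Psi>') \<le> fan_const d l * real (card (K \<union> F))"
    using Suc.prems(1,2) by (intro Suc.IH[OF _ _ \<Psi>'(1)]) auto
  also have "\<dots> \<le> fan_const d l * (real (card K) + real (Suc l) * real (card M))"
  proof (rule mult_left_mono[OF _ fan_const_nonneg[OF d0]])
    have "card (K \<union> F) \<le> card K + Suc l * card M"
      using card_Un_le[of K F] cF by (simp add: mult.commute)
    then have "real (card (K \<union> F)) \<le> real (card K + Suc l * card M)"
      by (simp only: of_nat_le_iff)
    then show "real (card (K \<union> F)) \<le> real (card K) + real (Suc l) * real (card M)"
      by (simp add: algebra_simps)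
  qed
  finally have cb: "real (card \<Psi>') \<le> fan_const d l * (real (card K) + real (Suc l) * real (card M))" .
  have ca: "card \<Psi>a \<le> 2 * card M" unfolding \<Psi>a_def by (rule card_parallel_paths_le[OF \<Psi> finM])
  have "\<Psi> = \<Psi>a \<union> (\<Psi> - \<Psi>a)" unfolding \<Psi>a_def by blast
  then have "card \<Psi> \<le> card \<Psi>a + card (\<Psi> - \<Psi>a)" by (metis card_Un_le)
  then have "real (card \<Psi>) \<le> 2 * real (card M) + fan_const d l * (real (card K) + real (Suc l) * real (card M))"
    using ca cb \<Psi>'(2) by linarith
  also have "\<dots> \<le> d * real (card K) + fan_const d l * (real (card K) + real (Suc l) * (d * real (card K) / 2))"
    using cM fan_const_nonneg[OF d0, of l] by (intro add_mono mult_left_mono) auto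
  also have "\<dots> = fan_const d (Suc l) * real (card K)" by (simp add: algebra_simps)
  finally show ?case .
qed

section \<open>Rankings with small fans\<close>

definition fan :: "'a \<Rightarrow> 'a list set \<Rightarrow> bool" where
  "fan z \<Phi> \<longleftrightarrow> finite \<Phi> \<and> (\<forall>P\<in>\<Phi>. hd P = z) \<and> (\<forall>P\<in>\<Phi>. \<forall>Q\<in>\<Phi>. P \<noteq> Q \<longrightarrow> set P \<inter> set Q = {z})"

lemma fanD:
  assumes "fan z \<Phi>"
  shows "finite \<Phi>" "P \<in> \<Phi> \<Longrightarrow> hd P = z" "P \<in> \<Phi> \<Longrightarrow> Q \<in> \<Phi> \<Longrightarrow> P \<noteq> Q \<Longrightarrow> set P \<inter> set Q = {z}"
  using assms unfolding fan_def by auto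

lemma fan_insert:
  assumes "fan z \<Phi>" "hd P = z" "\<forall>Q\<in>\<Phi>. set P \<inter> set Q = {z}"
  shows "fan z (insert P \<Phi>)"
  using assms unfolding fan_def by (simp add: Int_commute)

lemma fan_system_UN_fans:
  assumes "finite U" "\<forall>z\<in>U. fan z (\<Phi> z) \<and> (\<forall>P\<in>\<Phi> z. K_path G l U P)"
  shows "fan_system G l U (\<Union>z\<in>U. \<Phi> z)" "card (\<Union>z\<in>U. \<Phi> z) = (\<Sum>z\<in>U. card (\<Phi> z))"
proof -
  have fan: "fan z (\<Phi> z)" if "z \<in> U" for z using assms(2) that by blast
  note hd = fanD(2)[OF fan]
  show "fan_system G l U (\<Union>z\<in>U. \<Phi> z)"
    unfolding fan_system_def
  proof (intro conjI ballI impI)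
    show "finite (\<Union>z\<in>U. \<Phi> z)" using assms(1) fanD(1)[OF fan] by blast
  next
    fix P assume "P \<in> (\<Union>z\<in>U. \<Phi> z)"
    then show "K_path G l U P" using assms(2) by blast
  next
    fix P Q assume PQ: "P \<in> (\<Union>z\<in>U. \<Phi> z)" "Q \<in> (\<Union>z\<in>U. \<Phi> z)" "P \<noteq> Q \<and> hd P = hd Q"
    obtain z z' where z: "z \<in> U" "P \<in> \<Phi> z" "z' \<in> U" "Q \<in> \<Phi> z'"
      using PQ(1,2) by (elim UN_E)
    moreover have "z = z'" using hd[OF z(1,2)] hd[OF z(3,4)] PQ(3) by simp
    ultimately have "set P \<inter> set Q = {z}" using fanD(3)[OF fan] PQ(3) by simp
    then show "set P \<inter> set Q = {hd P}" using hd[OF z(1,2)] by simp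
  qed
  have disj: "\<Phi> z \<inter> \<Phi> z' = {}" if "z \<in> U" "z' \<in> U" "z \<noteq> z'" for z z'
  proof (rule disjoint_iff[THEN iffD2], intro allI impI)
    fix P assume "P \<in> \<Phi> z"
    then show "P \<notin> \<Phi> z'" using hd[OF that(1)] hd[OF that(2)] that(3) by metis
  qed
  show "card (\<Union>z\<in>U. \<Phi> z) = (\<Sum>z\<in>U. card (\<Phi> z))"
    by (rule card_UN_disjoint[OF assms(1)]) (use fanD(1)[OF fan] disj in simp_all)
qed

lemma ex_vertex_small_fans:
  assumes G: "is_graph G" and d: "top_grad R G \<le> d" and A: "fan_const d R \<le> real A"
    and U: "U \<subseteq> verts G" "U \<noteq> {}"
  shows "\<exists>z\<in>U. \<forall>\<Phi>. fan z \<Phi> \<and> (\<forall>P\<in>\<Phi>. K_path G R U P) \<longrightarrow> card \<Phi> \<le> A"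
proof (rule ccontr)
  assume "\<not> ?thesis"
  then have "\<forall>z\<in>U. \<exists>\<Phi>. fan z \<Phi> \<and> (\<forall>P\<in>\<Phi>. K_path G R U P) \<and> A < card \<Phi>"
    by (auto simp: not_le)
  from bchoice[OF this] obtain \<Phi>
    where \<Phi>: "\<forall>z\<in>U. fan z (\<Phi> z) \<and> (\<forall>P\<in>\<Phi> z. K_path G R U P) \<and> A < card (\<Phi> z)" ..
  have finU: "finite U" using G U(1) finite_subset unfolding is_graph_def by blast
  \<comment> \<open>the fans of all vertices of \<open>U\<close> together form a fan system with more than \<open>A |U|\<close> paths\<close>
  have "fan_system G R U (\<Union>z\<in>U. \<Phi> z)" using \<Phi> by (intro fan_system_UN_fans(1)[OF finU]) blast
  then have "real (card (\<Union>z\<in>U. \<Phi> z)) \<le> fan_const d R * real (card U)"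
    by (rule card_fan_system_le[OF G d le_SucI[OF order_refl] U(1)])
  also have "\<dots> < real (Suc A) * real (card U)"
    using A finU U(2) by (intro mult_strict_right_mono) (auto simp: card_gt_0_iff)
  also have "\<dots> \<le> real (card (\<Union>z\<in>U. \<Phi> z))"
  proof -
    have "(\<Sum>z\<in>U. Suc A) \<le> (\<Sum>z\<in>U. card (\<Phi> z))" using \<Phi> by (intro sum_mono) (simp add: Suc_le_eq)
    also have "\<dots> = card (\<Union>z\<in>U. \<Phi> z)" using fan_system_UN_fans(2)[OF finU, of \<Phi> G R] \<Phi> by simp
    finally have "Suc A * card U \<le> card (\<Union>z\<in>U. \<Phi> z)" by (simp add: mult.commute)
    then have "real (Suc A * card U) \<le> real (card (\<Union>z\<in>U. \<Phi> z))" by (simp only: of_nat_le_iff)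
    then show ?thesis by (simp add: algebra_simps)
  qed
  finally show False by simp
qed

definition rank_path :: "'a graph \<Rightarrow> nat \<Rightarrow> 'a set \<Rightarrow> ('a \<Rightarrow> nat) \<Rightarrow> 'a \<Rightarrow> 'a list \<Rightarrow> bool" where
  "rank_path G R U rk z P \<longleftrightarrow> is_path G P \<and> hd P = z \<and> 1 \<le> path_len P \<and> path_len P \<le> R \<and>
     last P \<in> U \<and> rk (last P) < rk z \<and> (\<forall>x\<in>inner_verts P \<inter> U. rk z < rk x)"

lemma rank_path_top:
  assumes "rank_path G R U rk z P" "z \<in> U" "\<forall>x\<in>U. rk x \<le> rk z"
  shows "K_path G R U P"
proof -
  have "inner_verts P \<inter> U = {}"
    using assms(1,3) unfolding rank_path_def by (meson disjoint_iff IntI leD)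
  then show ?thesis using assms(1,2) unfolding rank_path_def K_path_def by auto
qed

lemma rank_path_remove:
  assumes "rank_path G R U rk w P" "rk w < rk z" "\<forall>x\<in>U - {z}. rk' x = rk x" "w \<in> U - {z}"
  shows "rank_path G R (U - {z}) rk' w P"
proof -
  have "last P \<noteq> z" using assms(1,2) unfolding rank_path_def by auto
  then show ?thesis using assms unfolding rank_path_def by auto
qed

lemma ex_fan_bounded_ranking:
  assumes G: "is_graph G" and d: "top_grad R G \<le> d" and A: "fan_const d R \<le> real A"
  shows "U \<subseteq> verts G \<Longrightarrow> \<exists>rk. inj_on rk U \<and> (\<forall>x\<in>U. rk x < card U) \<and>
    (\<forall>z\<in>U. \<forall>\<Phi>. fan z \<Phi> \<and> (\<forall>P\<in>\<Phi>. rank_path G R U rk z P) \<longrightarrow> card \<Phi> \<le> A)"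
proof (induction "card U" arbitrary: U rule: less_induct)
  case less
  show ?case
  proof (cases "U = {}")
    case False
    obtain z where z: "z \<in> U" and small: "\<And>\<Phi>. fan z \<Phi> \<Longrightarrow> \<forall>P\<in>\<Phi>. K_path G R U P \<Longrightarrow> card \<Phi> \<le> A"
      using ex_vertex_small_fans[OF G d A less.prems False] by blast
    let ?U' = "U - {z}"
    have finU: "finite U" using G less.prems finite_subset unfolding is_graph_def by blast
    then have cU: "card U = Suc (card ?U')" using z by (simp add: card_Suc_Diff1 del: card_Diff_insert)
    have "card ?U' < card U" "?U' \<subseteq> verts G" using cU less.prems by auto
    from less.hyps[OF this] obtain rk' where rk': "inj_on rk' ?U'" "\<forall>x\<in>?U'. rk' x < card ?U'"
      "\<forall>w\<in>?U'. \<forall>\<Phi>. fan w \<Phi> \<and> (\<forall>P\<in>\<Phi>. rank_path G R ?U' rk' w P) \<longrightarrow> card \<Phi> \<le> A"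
      by blast
    \<comment> \<open>\<open>z\<close> gets the top rank, so its rank paths are \<open>U\<close>-paths and fans of them are small\<close>
    define rk where "rk = rk'(z := card ?U')"
    have agree: "\<forall>x\<in>?U'. rk' x = rk x" and below: "\<forall>x\<in>?U'. rk x < rk z"
      using rk'(2) unfolding rk_def by auto
    have "inj_on rk U"
    proof -
      have "inj_on rk ?U'" using rk'(1) agree inj_on_cong by fastforce
      moreover have "rk z \<notin> rk ` ?U'"
      proof
        assume "rk z \<in> rk ` ?U'"
        then obtain x where "x \<in> ?U'" "rk z = rk x" by blast
        then show False using below by force
      qed
      ultimately have "inj_on rk (insert z ?U')" unfolding inj_on_insert by simp
      then show ?thesis using z by (simp add: insert_absorb)
    qed
    moreover have "\<forall>x\<in>U. rk x < card U" using rk'(2) cU unfolding rk_def by (auto simp: less_Suc_eq)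
    moreover have "card \<Phi> \<le> A" if w: "w \<in> U" and \<Phi>: "fan w \<Phi>" "\<forall>P\<in>\<Phi>. rank_path G R U rk w P" for w \<Phi>
    proof (cases "w = z")
      case True
      have "\<forall>x\<in>U. rk x \<le> rk z" using below by (metis Diff_iff less_imp_le order_refl singletonD)
      then show ?thesis using small \<Phi> rank_path_top z True by metis
    next
      case False
      then have "w \<in> ?U'" using w by blast
      then have "\<forall>P\<in>\<Phi>. rank_path G R ?U' rk' w P"
        using \<Phi>(2) rank_path_remove below agree by metis
      then show ?thesis using rk'(3) \<open>w \<in> ?U'\<close> \<Phi>(1) by blast
    qed
    ultimately show ?thesis by blast
  qed simp
qed

section \<open>Weak reachability and a cop strategy\<close>

definition wreach :: "'a graph \<Rightarrow> ('a \<Rightarrow> nat) \<Rightarrow> 'a \<Rightarrow> nat \<Rightarrow> 'a set" where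
  "wreach G rk z k = {u. \<exists>P. is_path G P \<and> hd P = z \<and> last P = u \<and> path_len P \<le> k \<and>
                            (\<forall>x\<in>set P. rk u \<le> rk x)}"

lemma wreach_subset: "wreach G rk z k \<subseteq> verts G"
  unfolding wreach_def using path_last_in_verts by blast

lemma wreach_eq_empty: "z \<notin> verts G \<Longrightarrow> wreach G rk z k = {}"
  unfolding wreach_def using path_hd_in_verts by blast

lemma in_wreach_drop:
  assumes "is_path G P" "path_len P \<le> Suc k" "\<forall>x\<in>set P. rk (last P) \<le> rk x" "0 < i" "i < length P"
  shows "last P \<in> wreach G rk (P ! i) k"
  unfolding wreach_def
proof (intro CollectI exI[of _ "drop i P"] conjI)
  show "is_path G (drop i P)" using assms(1,5) by (rule is_path_drop)
  show "hd (drop i P) = P ! i" using assms(5) by (rule hd_drop_conv_nth)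
  show "last (drop i P) = last P" using assms(5) by simp
  show "path_len (drop i P) \<le> k" using assms(2,4) unfolding path_len_def by simp
  show "\<forall>x\<in>set (drop i P). rk (last P) \<le> rk x" using assms(3) by (meson in_set_dropD)
qed

lemma in_wreach_of_walk:
  assumes w: "is_walk G w" and x: "x \<in> set w" "\<forall>y\<in>set w. rk x \<le> rk y" and "length w \<le> Suc k"
  shows "x \<in> wreach G rk (hd w) k"
proof -
  obtain i where i: "i < length w" "w ! i = x" using x(1) by (meson in_set_conv_nth)
  have "is_walk G (take (Suc i) w)" using w by (rule is_walk_take) simp
  from ex_path_in_walk[OF this] obtain p where "is_path G p" "hd p = hd (take (Suc i) w)"
    "last p = last (take (Suc i) w)" "length p \<le> length (take (Suc i) w)" "set p \<subseteq> set (take (Suc i) w)"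
    by blast
  moreover have "hd (take (Suc i) w) = hd w" using i(1) by (cases w) auto
  moreover have "last (take (Suc i) w) = x" using i by (simp add: take_Suc_conv_app_nth)
  moreover note set_take_subset[of "Suc i" w]
  ultimately have p: "is_path G p" "hd p = hd w" "last p = x" "length p \<le> Suc i" "set p \<subseteq> set w"
    by auto
  then show ?thesis
    unfolding wreach_def using x(2) i(1) assms(4)
    by (intro CollectI exI[of _ p]) (auto simp: path_len_def)
qed

lemma rank_path_take_first_lower:
  assumes P: "is_path G P" "hd P = z" and inj: "inj_on rk (verts G)"
    and j: "0 < j" "j < length P" "j \<le> R" "rk (P ! j) < rk z" "\<forall>i. 0 < i \<and> i < j \<longrightarrow> \<not> rk (P ! i) < rk z"
  shows "rank_path G R (verts G) rk z (take (Suc j) P)"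
proof -
  note pre = path_take_Suc[OF P(1) j(2)]
  have "rk z < rk x" if x: "x \<in> inner_verts (take (Suc j) P)" for x
  proof -
    obtain i where i: "0 < i" "i < j" "P ! i = x" using x inner_verts_take_Suc[OF j(2)] by blast
    have "P ! i \<noteq> P ! 0"
      using nth_eq_iff_index_eq[of P i 0] i j(2) P(1) unfolding is_path_def by auto
    moreover have "P ! 0 = z" using P(2) path_nonempty[OF P(1)] by (simp add: hd_conv_nth)
    ultimately have "x \<noteq> z" using i(3) by simp
    moreover have "x \<in> verts G" using i j(2) path_verts[OF P(1)] nth_mem by (metis less_trans subsetD)
    moreover have "z \<in> verts G" using P path_hd_in_verts by blast
    ultimately have "rk x \<noteq> rk z" using inj unfolding inj_on_def by blast
    then show ?thesis using j(5) i by fastforce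
  qed
  then show ?thesis
    unfolding rank_path_def using pre P(2) j path_last_in_verts[OF pre(1)] by auto
qed

lemma max_fan_meets:
  assumes \<Phi>: "fan z \<Phi>" "\<forall>P\<in>\<Phi>. rank_path G R U rk z P"
    and max: "\<And>\<Phi>'. fan z \<Phi>' \<Longrightarrow> \<forall>P\<in>\<Phi>'. rank_path G R U rk z P \<Longrightarrow> card \<Phi>' \<le> card \<Phi>"
    and Q: "rank_path G R U rk z Q"
  shows "\<exists>x\<in>set Q - {z}. x \<in> (\<Union>P\<in>\<Phi>. set P)"
proof (rule ccontr)
  assume miss: "\<not> ?thesis"
  have "Q \<noteq> []" "hd Q = z" using Q path_nonempty unfolding rank_path_def by blast+
  then have "z \<in> set Q" by (metis hd_in_set)
  have "set Q \<inter> set P = {z}" if P: "P \<in> \<Phi>" for P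
  proof -
    have "P \<noteq> []" using \<Phi>(2) P path_nonempty unfolding rank_path_def by blast
    then have "z \<in> set P" using fanD(2)[OF \<Phi>(1) P] hd_in_set by metis
    then show ?thesis using miss P \<open>z \<in> set Q\<close> by blast
  qed
  then have "fan z (insert Q \<Phi>)" using fan_insert[OF \<Phi>(1) \<open>hd Q = z\<close>] by blast
  then have "card (insert Q \<Phi>) \<le> card \<Phi>" using max \<Phi>(2) Q by simp
  moreover have "last Q \<in> set Q - {z}"
    using Q \<open>Q \<noteq> []\<close> unfolding rank_path_def by auto
  then have "Q \<notin> \<Phi>" using miss by blast
  ultimately show False using fanD(1)[OF \<Phi>(1)] by simp
qed

lemma wreach_Suc_subset:
  assumes inj: "inj_on rk (verts G)" and z: "z \<in> verts G"
    and \<Phi>: "fan z \<Phi>" "\<forall>P\<in>\<Phi>. rank_path G R (verts G) rk z P"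
    and max: "\<And>\<Phi>'. fan z \<Phi>' \<Longrightarrow> \<forall>P\<in>\<Phi>'. rank_path G R (verts G) rk z P \<Longrightarrow> card \<Phi>' \<le> card \<Phi>"
    and k: "Suc k \<le> R"
  shows "wreach G rk z (Suc k) \<subseteq> insert z (\<Union>w\<in>(\<Union>Q\<in>\<Phi>. set Q). wreach G rk w k)"
proof
  fix u assume "u \<in> wreach G rk z (Suc k)"
  then obtain P where P: "is_path G P" "hd P = z" "last P = u" "path_len P \<le> Suc k"
    and low: "\<forall>x\<in>set P. rk u \<le> rk x" unfolding wreach_def by blast
  show "u \<in> insert z (\<Union>w\<in>(\<Union>Q\<in>\<Phi>. set Q). wreach G rk w k)"
  proof (cases "u = z")
    case False
    have ne: "P \<noteq> []" using P(1) by (rule path_nonempty)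
    have P0: "P ! 0 = z" and Pn: "P ! (length P - 1) = u" using P(2,3) ne by (simp_all add: hd_conv_nth last_conv_nth)
    have "rk u \<le> rk z" using low P(2) ne by auto
    moreover have "rk u \<noteq> rk z"
      using inj False path_last_in_verts[OF P(1)] z P(3) unfolding inj_on_def by blast
    ultimately have "rk (P ! (length P - 1)) < rk z" using Pn by simp
    define j where "j = (LEAST j. rk (P ! j) < rk z)"
    have j: "rk (P ! j) < rk z" "j \<le> length P - 1" "\<forall>i. 0 < i \<and> i < j \<longrightarrow> \<not> rk (P ! i) < rk z"
      unfolding j_def using \<open>rk (P ! (length P - 1)) < rk z\<close>
      by (rule LeastI, rule Least_le) (use not_less_Least in blast)
    have "0 < j" using j(1) P0 by (cases j) auto
    have jl: "j < length P" using j(2) ne by (cases P) auto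
    have "j \<le> R" using j(2) P(4) k unfolding path_len_def by linarith
    have pre: "rank_path G R (verts G) rk z (take (Suc j) P)"
      using rank_path_take_first_lower[OF P(1,2) inj \<open>0 < j\<close> jl \<open>j \<le> R\<close> j(1,3)] .
    obtain x where x: "x \<in> set (take (Suc j) P)" "x \<noteq> z" "x \<in> (\<Union>Q\<in>\<Phi>. set Q)"
      using max_fan_meets[OF \<Phi> max pre] by blast
    then obtain i where "i \<le> j" "P ! i = x" using jl by (auto simp: in_set_conv_nth less_Suc_eq_le)
    then have "\<exists>i. 0 < i \<and> i \<le> j \<and> P ! i \<in> (\<Union>Q\<in>\<Phi>. set Q)" using x(2,3) P0 by (metis gr0I)
    then obtain i where i: "0 < i" "i \<le> j" "P ! i \<in> (\<Union>Q\<in>\<Phi>. set Q)" by blast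
    have "u \<in> wreach G rk (P ! i) k"
      using in_wreach_drop[OF P(1,4) _ i(1)] low P(3) i(2) jl by simp
    then show ?thesis using i(3) by blast
  qed simp
qed

primrec wreach_bound :: "nat \<Rightarrow> nat \<Rightarrow> nat \<Rightarrow> nat" where
  "wreach_bound A R 0 = 1"
| "wreach_bound A R (Suc k) = 1 + A * Suc R * wreach_bound A R k"

lemma card_wreach_le:
  assumes G: "is_graph G" and inj: "inj_on rk (verts G)"
    and fans: "\<forall>z\<in>verts G. \<forall>\<Phi>. fan z \<Phi> \<and> (\<forall>P\<in>\<Phi>. rank_path G R (verts G) rk z P) \<longrightarrow> card \<Phi> \<le> A"
  shows "k \<le> R \<Longrightarrow> card (wreach G rk z k) \<le> wreach_bound A R k"
proof (induction k arbitrary: z)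
  case 0
  have "wreach G rk z 0 \<subseteq> {z}"
  proof
    fix u assume "u \<in> wreach G rk z 0"
    then obtain P where "is_path G P" "hd P = z" "last P = u" "path_len P = 0" unfolding wreach_def by auto
    then show "u \<in> {z}" using path_nonempty[of G P] by (cases P) (auto simp: path_len_def)
  qed
  then show ?case using card_mono[of "{z}"] by simp
next
  case (Suc k)
  show ?case
  proof (cases "z \<in> verts G")
    case False
    then show ?thesis by (simp add: wreach_eq_empty)
  next
    case z: True
    let ?adm = "\<lambda>\<Phi>. fan z \<Phi> \<and> (\<forall>P\<in>\<Phi>. rank_path G R (verts G) rk z P)"
    have bound: "card \<Phi> \<le> A" if "?adm \<Phi>" for \<Phi> using fans z that by blast
    have "?adm {}" by (simp add: fan_def)
    moreover have "\<forall>\<Phi>. ?adm \<Phi> \<longrightarrow> card \<Phi> < Suc A" using bound le_imp_less_Suc by blast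
    ultimately obtain \<Phi> where \<Phi>: "?adm \<Phi>" and max: "\<forall>\<Phi>'. ?adm \<Phi>' \<longrightarrow> card \<Phi>' \<le> card \<Phi>"
      by (rule ex_has_greatest_nat[THEN exE]) blast
    define Z where "Z = (\<Union>Q\<in>\<Phi>. set Q)"
    have fin\<Phi>: "finite \<Phi>" using \<Phi> fanD(1) by (elim conjE)
    have "\<forall>Q\<in>\<Phi>. path_len Q \<le> R" using \<Phi> unfolding rank_path_def by simp
    then have "card Z \<le> card \<Phi> * Suc R" unfolding Z_def by (rule card_UN_set_paths_le[OF fin\<Phi>])
    also have "\<dots> \<le> A * Suc R" using mult_le_mono1[OF bound[OF \<Phi>], of "Suc R"] by simp
    finally have cZ: "card Z \<le> A * Suc R" .
    have finZ: "finite Z" unfolding Z_def using fin\<Phi> by blast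
    have "finite (verts G)" using G unfolding is_graph_def by simp
    then have finw: "finite (wreach G rk w k)" for w by (rule finite_subset[OF wreach_subset])
    then have fin: "finite (\<Union>w\<in>Z. wreach G rk w k)" using finZ by simp
    have "card (wreach G rk z (Suc k)) \<le> card (insert z (\<Union>w\<in>Z. wreach G rk w k))"
      using wreach_Suc_subset[OF inj z _ _ max[rule_format] Suc.prems] \<Phi> fin unfolding Z_def by (intro card_mono) auto
    also have "\<dots> \<le> Suc (card (\<Union>w\<in>Z. wreach G rk w k))" using fin by (simp add: card_insert_if)
    also have "\<dots> \<le> Suc (\<Sum>w\<in>Z. card (wreach G rk w k))" using card_UN_le[OF finZ] by simp
    also have "\<dots> \<le> Suc (card Z * wreach_bound A R k)"
    proof -
      have "card (wreach G rk w k) \<le> wreach_bound A R k" for w using Suc.IH Suc.prems by simp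
      then show ?thesis using sum_bounded_above[of Z "\<lambda>w. card (wreach G rk w k)"] by simp
    qed
    also have "\<dots> \<le> wreach_bound A R (Suc k)" using mult_right_mono[OF cZ, of "wreach_bound A R k"] by simp
    finally show ?thesis .
  qed
qed

lemma min_rank_increases:
  assumes p: "is_path G p" "path_len p \<le> r" and q: "is_path G q" "path_len q \<le> r" "last p = hd q"
    and avoid: "set q \<inter> (wreach G rk (hd p) (2 * r) \<inter> wreach G rk (hd q) (2 * r)) = {}"
  shows "Min (rk ` set p) < Min (rk ` set q)"
proof (rule ccontr)
  assume ge: "\<not> ?thesis"
  have fin: "finite (rk ` set P)" "rk ` set P \<noteq> {}" if "is_path G P" for P
    using path_nonempty[OF that] by auto
  obtain x where x: "x \<in> set q" "rk x = Min (rk ` set q)" using Min_in[OF fin[OF q(1)]] by auto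
  have low_q: "\<forall>y\<in>set q. rk x \<le> rk y" using x(2) fin[OF q(1)] by simp
  moreover have "\<forall>y\<in>set p. rk x \<le> rk y"
  proof
    fix y assume "y \<in> set p"
    then have "Min (rk ` set p) \<le> rk y" using fin[OF p(1)] by simp
    then show "rk x \<le> rk y" using x(2) ge by linarith
  qed
  ultimately have low: "\<forall>y\<in>set p \<union> set q. rk x \<le> rk y" by blast
  have "x \<in> wreach G rk (hd q) (2 * r)"
    using in_wreach_of_walk[OF path_is_walk[OF q(1)] x(1) low_q] q(2) unfolding path_len_def by simp
  moreover have "x \<in> wreach G rk (hd p) (2 * r)"
  proof -
    let ?w = "p @ tl q"
    have "is_walk G ?w" using is_walk_append[OF path_is_walk[OF p(1)] path_is_walk[OF q(1)] q(3)] .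
    moreover have "set ?w = set p \<union> set q"
      using last_in_set[OF path_nonempty[OF p(1)]] q(3) path_nonempty[OF q(1)] by (cases q) auto
    moreover have "length ?w \<le> Suc (2 * r)" using p(2) q(2) unfolding path_len_def by simp
    moreover have "hd ?w = hd p" using path_nonempty[OF p(1)] by simp
    ultimately show ?thesis using in_wreach_of_walk[of G ?w x rk "2 * r"] x(1) low by simp
  qed
  ultimately show False using avoid x(1) by blast
qed

lemma cops_win_wreach:
  assumes rk: "\<forall>x\<in>verts G. rk x < N" and small: "\<forall>z. card (wreach G rk z (2 * r)) \<le> B"
  shows "cops_win r B G"
  unfolding cops_win_def
proof (intro exI[of _ "\<lambda>h. wreach G rk (last h) (2 * r)"] conjI allI impI)
  fix h
  show "wreach G rk (last h) (2 * r) \<subseteq> verts G" by (rule wreach_subset)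
  show "card (wreach G rk (last h) (2 * r)) \<le> B" using small by blast
next
  fix v assume play: "consistent_play G r (\<lambda>h. wreach G rk (last h) (2 * r)) v"
  let ?S = "cop_set (\<lambda>h. wreach G rk (last h) (2 * r)) v"
  have S: "?S (Suc n) = wreach G rk (v n) (2 * r)" for n by (simp add: cop_set_def)
  have "\<forall>n. \<exists>p. is_path G p \<and> hd p = v n \<and> last p = v (Suc n) \<and> path_len p \<le> r \<and>
      set p \<inter> (?S n \<inter> ?S (Suc n)) = {}"
    using play unfolding consistent_play_def robber_move_def by (metis diff_Suc_1 le_add1 plus_1_eq_Suc)
  then obtain p where p: "\<And>n. is_path G (p n)" "\<And>n. hd (p n) = v n" "\<And>n. last (p n) = v (Suc n)"
    "\<And>n. path_len (p n) \<le> r" "\<And>n. set (p n) \<inter> (?S n \<inter> ?S (Suc n)) = {}"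
    by metis
  define m where "m n = Min (rk ` set (p n))" for n
  have "m n < m (Suc n)" for n
    unfolding m_def using p(5)[of "Suc n"] p(2,3) S
    by (intro min_rank_increases[OF p(1,4) p(1,4)]) simp_all
  then have "n \<le> m n" for n by (induction n) (auto simp: Suc_le_eq intro: le_less_trans)
  moreover have "m N < N"
  proof -
    have "m N \<in> rk ` set (p N)" unfolding m_def using path_nonempty[OF p(1)] by simp
    then obtain y where "y \<in> set (p N)" "m N = rk y" by blast
    moreover have "y \<in> verts G" using path_verts[OF p(1)[of N]] \<open>y \<in> set (p N)\<close> by blast
    ultimately show ?thesis using rk by simp
  qed
  ultimately show "\<exists>i\<ge>1. v i \<in> ?S i" using not_le by blast
qed

lemma copw_le_of_top_grad:
  assumes G: "is_graph G" and d: "top_grad (2 * r) G \<le> d"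
  shows "copw r G \<le> wreach_bound (nat \<lceil>fan_const d (2 * r)\<rceil>) (2 * r) (2 * r)"
proof -
  let ?A = "nat \<lceil>fan_const d (2 * r)\<rceil>"
  obtain rk where rk: "inj_on rk (verts G)" "\<forall>x\<in>verts G. rk x < card (verts G)"
    "\<forall>z\<in>verts G. \<forall>\<Phi>. fan z \<Phi> \<and> (\<forall>P\<in>\<Phi>. rank_path G (2 * r) (verts G) rk z P) \<longrightarrow> card \<Phi> \<le> ?A"
    using ex_fan_bounded_ranking[OF G d real_nat_ceiling_ge order_refl] by blast
  have "card (wreach G rk z (2 * r)) \<le> wreach_bound ?A (2 * r) (2 * r)" for z
    using card_wreach_le[OF G rk(1,3)] by blast
  then have "cops_win r (wreach_bound ?A (2 * r) (2 * r)) G"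
    using cops_win_wreach[OF rk(2)] by blast
  then show ?thesis unfolding copw_def by (rule Least_le)
qed

theorem mainTheorem3:
  fixes C :: "'a graph set"
  assumes "\<forall>G\<in>C. is_graph G"
  shows "bounded_expansion C \<longleftrightarrow> (\<forall>r::nat. \<exists>K::nat. \<forall>G\<in>C. copw r G \<le> K)"
proof
  assume "bounded_expansion C"
  show "\<forall>r. \<exists>K. \<forall>G\<in>C. copw r G \<le> K"
  proof
    fix r
    obtain d where "\<forall>G\<in>C. top_grad (2 * r) G \<le> d"
      using \<open>bounded_expansion C\<close> unfolding bounded_expansion_def by blast
    then show "\<exists>K. \<forall>G\<in>C. copw r G \<le> K" using copw_le_of_top_grad assms by blast
  qed
next
  assume copw: "\<forall>r. \<exists>K. \<forall>G\<in>C. copw r G \<le> K"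
  show "bounded_expansion C"
    unfolding bounded_expansion_def
  proof
    fix r
    obtain K where "\<forall>G\<in>C. copw (Suc r) G \<le> K" using copw by blast
    then have "\<forall>G\<in>C. top_grad r G \<le> 2 * real K"
      using top_grad_le_copw assms by (meson mult_left_mono of_nat_le_iff order_trans zero_le_numeral)
    then show "\<exists>c. \<forall>G\<in>C. top_grad r G \<le> c" by blast
  qed
qed

end
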